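(* Let $\mathcal{K}\subset\mathcal{O}_p(\mathcal{L})$ be an ideal of finite multiplicity, and suppose $f\in\mathcal{O}_p(\mathcal{L})$ satisfies $f^n\in\mathcal{K}$ for some integer $n\ge1$. Then $$\operatorname{mult}\mathcal{K}\le n\,\operatorname{mult}\langle\mathcal{K},f\rangle .$$
   Context: $\mathcal{O}_p(\mathcal{L})$ denotes the ring of germs at a point $p$ of holomorphic functions on a two-dimensional complex manifold $\mathcal{L}$ (so $\mathcal{O}_p(\mathcal{L})\cong\mathbb{C}\{x,y\}$). For an ideal $\mathcal{I}\subset\mathcal{O}_p(\mathcal{L})$, $\operatorname{mult}\mathcal{I}=\dim_{\mathbb{C}}\mathcal{O}_p(\mathcal{L})/\mathcal{I}$; finite multiplicity means this dimension is finite. *)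

theory Defs
  imports "HOL-Analysis.Analysis"
begin

text \<open>Local model: a two-dimensional complex manifold near p is C^2 near a point p.
  A function is holomorphic near p if it is complex (Frechet) differentiable,
  i.e. its derivative is C-linear, at every point of an open neighbourhood of p.\<close>

definition holo_near :: "complex \<times> complex \<Rightarrow> (complex \<times> complex \<Rightarrow> complex) \<Rightarrow> bool" where
  "holo_near p f \<longleftrightarrow> (\<exists>U. open U \<and> p \<in> U \<and>
     (\<forall>z\<in>U. \<exists>a b. (f has_derivative (\<lambda>h. a * fst h + b * snd h)) (at z)))"

definition germs :: "complex \<times> complex \<Rightarrow> (complex \<times> complex \<Rightarrow> complex) set" where
  "germs p = {f. holo_near p f}"

definition germ_eq :: "complex \<times> complex \<Rightarrow> (complex \<times> complex \<Rightarrow> complex) \<Rightarrow> (complex \<times> complex \<Rightarrow> complex) \<Rightarrow> bool" where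
  "germ_eq p f g \<longleftrightarrow> (\<forall>\<^sub>F z in nhds p. f z = g z)"

text \<open>An ideal of the germ ring O_p, represented by the set of all representatives
  of its germs (hence closed under germ equality).\<close>
definition germ_ideal :: "complex \<times> complex \<Rightarrow> (complex \<times> complex \<Rightarrow> complex) set \<Rightarrow> bool" where
  "germ_ideal p I \<longleftrightarrow> I \<subseteq> germs p \<and> (\<lambda>z. 0) \<in> I
     \<and> (\<forall>f\<in>I. \<forall>g\<in>I. (\<lambda>z. f z + g z) \<in> I)
     \<and> (\<forall>h\<in>germs p. \<forall>f\<in>I. (\<lambda>z. h z * f z) \<in> I)
     \<and> (\<forall>f\<in>I. \<forall>g\<in>germs p. germ_eq p f g \<longrightarrow> g \<in> I)"

definition gen_ideal :: "complex \<times> complex \<Rightarrow> (complex \<times> complex \<Rightarrow> complex) set \<Rightarrow> (complex \<times> complex \<Rightarrow> complex) \<Rightarrow> (complex \<times> complex \<Rightarrow> complex) set" where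
  "gen_ideal p I f = {g. \<exists>k\<in>I. \<exists>h\<in>germs p. g = (\<lambda>z. k z + h z * f z)}"

definition spans_mod :: "complex \<times> complex \<Rightarrow> (complex \<times> complex \<Rightarrow> complex) set \<Rightarrow> nat \<Rightarrow> (nat \<Rightarrow> complex \<times> complex \<Rightarrow> complex) \<Rightarrow> bool" where
  "spans_mod p I n B \<longleftrightarrow> (\<forall>i<n. B i \<in> germs p) \<and>
     (\<forall>g\<in>germs p. \<exists>c :: nat \<Rightarrow> complex. (\<lambda>z. g z - (\<Sum>i<n. c i * B i z)) \<in> I)"

definition finite_mult :: "complex \<times> complex \<Rightarrow> (complex \<times> complex \<Rightarrow> complex) set \<Rightarrow> bool" where
  "finite_mult p I \<longleftrightarrow> (\<exists>n B. spans_mod p I n B)"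

text \<open>mult I = dim_C (O_p / I) = least size of a spanning family of the quotient.\<close>
definition mult :: "complex \<times> complex \<Rightarrow> (complex \<times> complex \<Rightarrow> complex) set \<Rightarrow> nat" where
  "mult p I = (LEAST n. \<exists>B. spans_mod p I n B)"

end

theory Submission
  imports Defs
begin

text \<open>Let \<open>B\<^sub>1, \<dots>, B\<^sub>m\<close> span \<open>O\<^sub>p/\<langle>K, f\<rangle>\<close>. Every germ \<open>h\<close> can be written as
  \<open>h = b + k + h' f\<close> with \<open>b\<close> in the span of the \<open>B\<^sub>r\<close> and \<open>k \<in> K\<close>. Applying this repeatedly
  to the cofactor of \<open>f\<close> gives \<open>g \<equiv> b\<^sub>0 + b\<^sub>1 f + \<dots> + b\<^sub>j\<^sub>-\<^sub>1 f^(j-1) + h f^j\<close> modulo \<open>K\<close>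
  for every \<open>j\<close>; at \<open>j = n\<close> the last term lies in \<open>K\<close>, so the \<open>n m\<close> germs \<open>f^i B\<^sub>r\<close>
  span \<open>O\<^sub>p/K\<close>.\<close>

lemma holo_near_const: "holo_near p (\<lambda>z. c)"
  unfolding holo_near_def
proof (intro exI[of _ UNIV] conjI ballI)
  fix z :: "complex \<times> complex"
  have "((\<lambda>z. c) has_derivative (\<lambda>h. 0 * fst h + 0 * snd h)) (at z)"
    by simp
  then show "\<exists>a b. ((\<lambda>z. c) has_derivative (\<lambda>h. a * fst h + b * snd h)) (at z)"
    by blast
qed auto

lemma holo_near_mult:
  assumes "holo_near p f" "holo_near p g"
  shows "holo_near p (\<lambda>z. f z * g z)"
proof -
  obtain U where U: "open U" "p \<in> U"
    "\<forall>z\<in>U. \<exists>a b. (f has_derivative (\<lambda>h. a * fst h + b * snd h)) (at z)"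
    using assms(1) unfolding holo_near_def by blast
  obtain V where V: "open V" "p \<in> V"
    "\<forall>z\<in>V. \<exists>a b. (g has_derivative (\<lambda>h. a * fst h + b * snd h)) (at z)"
    using assms(2) unfolding holo_near_def by blast
  show ?thesis
    unfolding holo_near_def
  proof (intro exI[of _ "U \<inter> V"] conjI ballI)
    fix z assume "z \<in> U \<inter> V"
    then obtain a b c d
      where f': "(f has_derivative (\<lambda>h. a * fst h + b * snd h)) (at z)"
        and g': "(g has_derivative (\<lambda>h. c * fst h + d * snd h)) (at z)"
      using U V by blast
    have "(\<lambda>h. f z * (c * fst h + d * snd h) + (a * fst h + b * snd h) * g z)
        = (\<lambda>h. (f z * c + a * g z) * fst h + (f z * d + b * g z) * snd h)"
      by (auto simp: algebra_simps)
    with has_derivative_mult[OF f' g']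
    show "\<exists>a b. ((\<lambda>z. f z * g z) has_derivative (\<lambda>h. a * fst h + b * snd h)) (at z)"
      by metis
  qed (use U V in auto)
qed

lemma holo_near_power:
  assumes "holo_near p f"
  shows "holo_near p (\<lambda>z. f z ^ j)"
  by (induction j) (simp_all add: holo_near_const holo_near_mult[OF assms])

lemma germ_ideal_add:
  "germ_ideal p K \<Longrightarrow> u \<in> K \<Longrightarrow> v \<in> K \<Longrightarrow> (\<lambda>z. u z + v z) \<in> K"
  unfolding germ_ideal_def by blast

lemma germ_ideal_mult:
  "germ_ideal p K \<Longrightarrow> h \<in> germs p \<Longrightarrow> u \<in> K \<Longrightarrow> (\<lambda>z. h z * u z) \<in> K"
  unfolding germ_ideal_def by blast

lemma subset_gen_ideal: "K \<subseteq> gen_ideal p K f"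
proof
  fix u assume "u \<in> K"
  moreover have "(\<lambda>z. 0) \<in> germs p"
    by (simp add: germs_def holo_near_const)
  moreover have "u = (\<lambda>z. u z + 0 * f z)"
    by simp
  ultimately show "u \<in> gen_ideal p K f"
    unfolding gen_ideal_def by (intro CollectI bexI[of _ u] bexI[of _ "\<lambda>z. 0"]) auto
qed

lemma spans_mod_mono: "I \<subseteq> J \<Longrightarrow> spans_mod p I n B \<Longrightarrow> spans_mod p J n B"
  unfolding spans_mod_def by blast

lemma mult_le: "spans_mod p I n B \<Longrightarrow> mult p I \<le> n"
  unfolding mult_def by (blast intro: Least_le)

lemma spans_mod_mult:
  assumes "finite_mult p I"
  obtains B where "spans_mod p I (mult p I) B"
  using assms LeastI_ex[of "\<lambda>n. \<exists>B. spans_mod p I n B"]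
  unfolding finite_mult_def mult_def by blast

lemma finite_mult_gen_ideal: "finite_mult p K \<Longrightarrow> finite_mult p (gen_ideal p K f)"
  unfolding finite_mult_def using spans_mod_mono[OF subset_gen_ideal] by blast

lemma sum_lessThan_mult_div_mod:
  fixes G :: "nat \<Rightarrow> nat \<Rightarrow> 'a::comm_monoid_add"
  shows "(\<Sum>q<n * m. G (q div m) (q mod m)) = (\<Sum>i<n. \<Sum>r<m. G i r)"
proof -
  have "(\<Sum>q<n * m. G (q div m) (q mod m))
      = (\<Sum>i<n. \<Sum>q=i*m..<i*m+m. G (q div m) (q mod m))"
    by (rule sum.nat_group[symmetric])
  also have "\<dots> = (\<Sum>i<n. \<Sum>r<m. G i r)"
  proof (rule sum.cong[OF refl])
    fix i
    have "(\<Sum>q=i*m..<i*m+m. G (q div m) (q mod m))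
        = (\<Sum>r<m. G ((i*m+r) div m) ((i*m+r) mod m))"
      by (simp add: sum.atLeastLessThan_shift_0 atLeast0LessThan add.commute)
    also have "\<dots> = (\<Sum>r<m. G i r)"
      by (rule sum.cong) auto
    finally show "(\<Sum>q=i*m..<i*m+m. G (q div m) (q mod m)) = (\<Sum>r<m. G i r)" .
  qed
  finally show ?thesis .
qed

lemma spans_mod_product_family:
  assumes germs: "\<And>i r. i < n \<Longrightarrow> r < m \<Longrightarrow> F i r \<in> germs p"
    and span: "\<And>g. g \<in> germs p \<Longrightarrow>
      \<exists>c. (\<lambda>z. g z - (\<Sum>i<n. \<Sum>r<m. c i r * F i r z)) \<in> I"
  shows "spans_mod p I (n * m) (\<lambda>q. F (q div m) (q mod m))"
  unfolding spans_mod_def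
proof (intro conjI allI impI ballI)
  fix q assume "q < n * m"
  then have "q div m < n" "q mod m < m"
    by (rule less_mult_imp_div_less) (cases "m = 0"; use \<open>q < n * m\<close> in simp)
  then show "F (q div m) (q mod m) \<in> germs p"
    by (rule germs)
next
  fix g assume "g \<in> germs p"
  then obtain c where "(\<lambda>z. g z - (\<Sum>i<n. \<Sum>r<m. c i r * F i r z)) \<in> I"
    using span by blast
  moreover have "(\<Sum>q<n * m. c (q div m) (q mod m) * F (q div m) (q mod m) z)
      = (\<Sum>i<n. \<Sum>r<m. c i r * F i r z)" for z
    by (rule sum_lessThan_mult_div_mod)
  ultimately have "(\<lambda>z. g z - (\<Sum>q<n * m. c (q div m) (q mod m) * F (q div m) (q mod m) z)) \<in> I"
    by simp
  then show "\<exists>c. (\<lambda>z. g z - (\<Sum>q<n * m. c q * F (q div m) (q mod m) z)) \<in> I"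
    by (intro exI[of _ "\<lambda>q. c (q div m) (q mod m)"])
qed

lemma gen_ideal_power_expansion:
  assumes K: "germ_ideal p K" and f: "f \<in> germs p"
    and B: "spans_mod p (gen_ideal p K f) m B" and g: "g \<in> germs p"
  shows "\<exists>c. \<exists>h\<in>germs p.
    (\<lambda>z. g z - (\<Sum>i<j. \<Sum>r<m. c i r * (f z ^ i * B r z)) - h z * f z ^ j) \<in> K"
proof (induction j)
  case 0
  show ?case
    using K g by (intro exI bexI[of _ g]) (simp_all add: germ_ideal_def)
next
  case (Suc j)
  then obtain c h where h: "h \<in> germs p"
    and rem: "(\<lambda>z. g z - (\<Sum>i<j. \<Sum>r<m. c i r * (f z ^ i * B r z)) - h z * f z ^ j) \<in> K"
    by blast
  obtain d where "(\<lambda>z. h z - (\<Sum>r<m. d r * B r z)) \<in> gen_ideal p K f"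
    using B h unfolding spans_mod_def by blast
  then obtain k h' where k: "k \<in> K" and h': "h' \<in> germs p"
    and h_eq: "\<And>z. h z = (\<Sum>r<m. d r * B r z) + k z + h' z * f z"
    unfolding gen_ideal_def by (auto simp: fun_eq_iff algebra_simps)
  define c' where "c' = c(j := d)"
  have fj: "(\<lambda>z. f z ^ j) \<in> germs p"
    using f holo_near_power by (simp add: germs_def)
  have "(\<lambda>z. (g z - (\<Sum>i<j. \<Sum>r<m. c i r * (f z ^ i * B r z)) - h z * f z ^ j) + f z ^ j * k z) \<in> K"
    using germ_ideal_add[OF K rem germ_ideal_mult[OF K fj k]] .
  moreover have "(\<Sum>i<Suc j. \<Sum>r<m. c' i r * (f z ^ i * B r z))
      = (\<Sum>i<j. \<Sum>r<m. c i r * (f z ^ i * B r z)) + f z ^ j * (\<Sum>r<m. d r * B r z)" for z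
    by (simp add: c'_def sum_distrib_left mult.left_commute)
  ultimately have "(\<lambda>z. g z - (\<Sum>i<Suc j. \<Sum>r<m. c' i r * (f z ^ i * B r z)) - h' z * f z ^ Suc j) \<in> K"
    by (simp add: h_eq algebra_simps)
  with h' show ?case
    by blast
qed

lemma spans_mod_power_in_ideal:
  assumes K: "germ_ideal p K" and f: "f \<in> germs p" and fn: "(\<lambda>z. f z ^ n) \<in> K"
    and B: "spans_mod p (gen_ideal p K f) m B"
  shows "spans_mod p K (n * m) (\<lambda>q z. f z ^ (q div m) * B (q mod m) z)"
proof (rule spans_mod_product_family)
  fix i r assume "r < m"
  then have "holo_near p (B r)"
    using B by (simp add: spans_mod_def germs_def)
  then show "(\<lambda>z. f z ^ i * B r z) \<in> germs p"
    using f by (simp add: germs_def holo_near_mult holo_near_power)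
next
  fix g assume "g \<in> germs p"
  then obtain c h where h: "h \<in> germs p"
    and rem: "(\<lambda>z. g z - (\<Sum>i<n. \<Sum>r<m. c i r * (f z ^ i * B r z)) - h z * f z ^ n) \<in> K"
    using gen_ideal_power_expansion[OF K f B] by blast
  have "(\<lambda>z. (g z - (\<Sum>i<n. \<Sum>r<m. c i r * (f z ^ i * B r z)) - h z * f z ^ n) + h z * f z ^ n) \<in> K"
    using germ_ideal_add[OF K rem germ_ideal_mult[OF K h fn]] .
  then show "\<exists>c. (\<lambda>z. g z - (\<Sum>i<n. \<Sum>r<m. c i r * (f z ^ i * B r z))) \<in> K"
    by auto
qed

theorem mainTheorem2:
  fixes p :: "complex \<times> complex"
    and K :: "(complex \<times> complex \<Rightarrow> complex) set"
    and f :: "complex \<times> complex \<Rightarrow> complex"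
    and n :: nat
  assumes "germ_ideal p K" and "finite_mult p K"
    and "f \<in> germs p" and "n \<ge> 1" and "(\<lambda>z. f z ^ n) \<in> K"
  shows "mult p K \<le> n * mult p (gen_ideal p K f)"
proof -
  obtain B where "spans_mod p (gen_ideal p K f) (mult p (gen_ideal p K f)) B"
    using spans_mod_mult[OF finite_mult_gen_ideal[OF assms(2)]] .
  from spans_mod_power_in_ideal[OF assms(1,3,5) this]
  show ?thesis
    by (rule mult_le)
qed

end
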